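(* For every graph $G$, $\gamma_{oiR}(G)<\gamma_{oidR}(G)$.
   Context: Graphs are finite and simple (with at least one vertex). A DRD function of $G$ is $f:V(G)\to\{0,1,2,3\}$ such that every vertex with value $0$ has a neighbor with value $3$ or two neighbors with value $2$, and every vertex with value $1$ has a neighbor with value at least $2$; it is an OIDRD function if the set of vertices with value $0$ is independent, and $\gamma_{oidR}(G)$ is the minimum weight $\sum_v f(v)$ of an OIDRD function. A Roman dominating function is $f:V(G)\to\{0,1,2\}$ such that every vertex with value $0$ has a neighbor with value $2$; it is an OIRD function if the set of vertices with value $0$ is independent, and $\gamma_{oiR}(G)$ is the minimum weight of an OIRD function. *)

theory Defs
  imports Main
begin

definition graph :: "'a set \<Rightarrow> ('a \<Rightarrow> 'a \<Rightarrow> bool) \<Rightarrow> bool" where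
  "graph V E \<longleftrightarrow> finite V \<and> V \<noteq> {} \<and>
     (\<forall>u v. E u v \<longrightarrow> u \<in> V \<and> v \<in> V) \<and>
     (\<forall>u v. E u v \<longrightarrow> E v u) \<and> (\<forall>v. \<not> E v v)"

definition weight :: "'a set \<Rightarrow> ('a \<Rightarrow> nat) \<Rightarrow> nat" where
  "weight V f = (\<Sum>v\<in>V. f v)"

definition zeros_independent :: "'a set \<Rightarrow> ('a \<Rightarrow> 'a \<Rightarrow> bool) \<Rightarrow> ('a \<Rightarrow> nat) \<Rightarrow> bool" where
  "zeros_independent V E f \<longleftrightarrow>
     (\<forall>u\<in>V. \<forall>v\<in>V. f u = 0 \<and> f v = 0 \<longrightarrow> \<not> E u v)"

definition DRD :: "'a set \<Rightarrow> ('a \<Rightarrow> 'a \<Rightarrow> bool) \<Rightarrow> ('a \<Rightarrow> nat) \<Rightarrow> bool" where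
  "DRD V E f \<longleftrightarrow>
     (\<forall>v\<in>V. f v \<le> 3) \<and>
     (\<forall>v\<in>V. f v = 0 \<longrightarrow>
        (\<exists>u\<in>V. E v u \<and> f u = 3) \<or>
        (\<exists>u\<in>V. \<exists>w\<in>V. u \<noteq> w \<and> E v u \<and> E v w \<and> f u = 2 \<and> f w = 2)) \<and>
     (\<forall>v\<in>V. f v = 1 \<longrightarrow> (\<exists>u\<in>V. E v u \<and> f u \<ge> 2))"

definition OIDRD :: "'a set \<Rightarrow> ('a \<Rightarrow> 'a \<Rightarrow> bool) \<Rightarrow> ('a \<Rightarrow> nat) \<Rightarrow> bool" where
  "OIDRD V E f \<longleftrightarrow> DRD V E f \<and> zeros_independent V E f"

definition RD :: "'a set \<Rightarrow> ('a \<Rightarrow> 'a \<Rightarrow> bool) \<Rightarrow> ('a \<Rightarrow> nat) \<Rightarrow> bool" where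
  "RD V E f \<longleftrightarrow>
     (\<forall>v\<in>V. f v \<le> 2) \<and>
     (\<forall>v\<in>V. f v = 0 \<longrightarrow> (\<exists>u\<in>V. E v u \<and> f u = 2))"

definition OIRD :: "'a set \<Rightarrow> ('a \<Rightarrow> 'a \<Rightarrow> bool) \<Rightarrow> ('a \<Rightarrow> nat) \<Rightarrow> bool" where
  "OIRD V E f \<longleftrightarrow> RD V E f \<and> zeros_independent V E f"

definition gamma_oidR :: "'a set \<Rightarrow> ('a \<Rightarrow> 'a \<Rightarrow> bool) \<Rightarrow> nat" where
  "gamma_oidR V E = Min {weight V f | f. OIDRD V E f}"

definition gamma_oiR :: "'a set \<Rightarrow> ('a \<Rightarrow> 'a \<Rightarrow> bool) \<Rightarrow> nat" where
  "gamma_oiR V E = Min {weight V f | f. OIRD V E f}"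

end

theory Submission
  imports Defs
begin

text \<open>A minimum OIDRD function \<open>f\<close> is turned into a strictly lighter OIRD function without
creating new zeros. If \<open>f\<close> takes the value 3, capping it at 2 works, since a 0 dominated by a 3
or by two 2s still sees a 2. Otherwise every 0 is dominated by two 2s, and some vertex carries a 2
(the DRD conditions force a value \<open>\<ge> 2\<close> somewhere), so lowering that one 2 to 1 leaves every 0
with a neighbour of value 2.\<close>

lemma finite_weights:
  assumes "finite V" and "\<And>f. P f \<Longrightarrow> \<forall>v\<in>V. f v \<le> k"
  shows "finite {weight V f | f. P f}"
proof (rule finite_subset[of _ "{..k * card V}"])
  show "{weight V f | f. P f} \<subseteq> {..k * card V}"
  proof
    fix x assume "x \<in> {weight V f | f. P f}"
    then obtain f where x: "x = weight V f" and "\<forall>v\<in>V. f v \<le> k" using assms(2) by blast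
    then have "(\<Sum>v\<in>V. f v) \<le> (\<Sum>v\<in>V. k)" by (intro sum_mono) auto
    then show "x \<in> {..k * card V}" using x by (simp add: weight_def mult.commute)
  qed
qed simp

lemma gamma_oidR_attained:
  assumes "finite V"
  obtains f where "OIDRD V E f" and "gamma_oidR V E = weight V f"
proof -
  have "finite {weight V f | f. OIDRD V E f}"
    using assms by (rule finite_weights[where k = 3]) (simp add: OIDRD_def DRD_def)
  moreover have "OIDRD V E (\<lambda>v. 3)"
    by (simp add: OIDRD_def DRD_def zeros_independent_def)
  ultimately have "gamma_oidR V E \<in> {weight V f | f. OIDRD V E f}"
    unfolding gamma_oidR_def by (intro Min_in) auto
  then show thesis using that by blast
qed

lemma gamma_oiR_le_weight:
  assumes "finite V" and "OIRD V E g"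
  shows "gamma_oiR V E \<le> weight V g"
proof -
  have "finite {weight V f | f. OIRD V E f}"
    using assms(1) by (rule finite_weights[where k = 2]) (auto simp: OIRD_def RD_def)
  then show ?thesis
    unfolding gamma_oiR_def using assms(2) by (intro Min_le) auto
qed

lemma weight_strict_mono:
  assumes "finite V" and "\<forall>v\<in>V. g v \<le> f v" and "u \<in> V" and "g u < f u"
  shows "weight V g < weight V f"
  unfolding weight_def using assms by (intro sum_strict_mono_ex1) auto

lemma DRD_ex_value_ge_2:
  assumes "DRD V E f" and "V \<noteq> {}"
  shows "\<exists>u\<in>V. f u \<ge> 2"
proof -
  obtain v where v: "v \<in> V" using assms(2) by blast
  consider "f v = 0" | "f v = 1" | "f v \<ge> 2" by linarith
  then show ?thesis
  proof cases
    case 1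
    then have "(\<exists>u\<in>V. E v u \<and> f u = 3) \<or>
        (\<exists>u\<in>V. \<exists>w\<in>V. u \<noteq> w \<and> E v u \<and> E v w \<and> f u = 2 \<and> f w = 2)"
      using assms(1) v unfolding DRD_def by blast
    then obtain u where "u \<in> V" "f u = 3 \<or> f u = 2" by blast
    then show ?thesis by (intro bexI[of _ u]) auto
  next
    case 2
    then show ?thesis using assms(1) v unfolding DRD_def by blast
  qed (use v in blast)
qed

lemma OIRD_cap_at_2:
  assumes "OIDRD V E f"
  shows "OIRD V E (\<lambda>v. min (f v) 2)"
  unfolding OIRD_def RD_def
proof (intro conjI ballI impI)
  fix v assume "v \<in> V" "min (f v) 2 = 0"
  then have "(\<exists>u\<in>V. E v u \<and> f u = 3) \<or>
      (\<exists>u\<in>V. \<exists>w\<in>V. u \<noteq> w \<and> E v u \<and> E v w \<and> f u = 2 \<and> f w = 2)"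
    using assms unfolding OIDRD_def DRD_def by auto
  then show "\<exists>u\<in>V. E v u \<and> min (f u) 2 = 2" by auto
next
  show "zeros_independent V E (\<lambda>v. min (f v) 2)"
    using assms by (auto simp: OIDRD_def zeros_independent_def min_def split: if_splits)
qed simp

lemma OIRD_lower_a_2:
  assumes "OIDRD V E f" and no3: "\<forall>v\<in>V. f v \<noteq> 3" and "u \<in> V" and "f u = 2"
  shows "OIRD V E (f(u := 1))"
  unfolding OIRD_def RD_def
proof (intro conjI ballI impI)
  fix v assume "v \<in> V"
  then have "f v \<le> 3" and "f v \<noteq> 3" using assms(1) no3 by (auto simp: OIDRD_def DRD_def)
  then show "(f(u := 1)) v \<le> 2" by simp
next
  fix v assume v: "v \<in> V" "(f(u := 1)) v = 0"
  then have "f v = 0" by (auto split: if_splits)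
  then obtain a b where "a \<in> V" "b \<in> V" "a \<noteq> b" "E v a" "E v b" "f a = 2" "f b = 2"
    using assms(1) no3 v(1) unfolding OIDRD_def DRD_def by blast
  then show "\<exists>w\<in>V. E v w \<and> (f(u := 1)) w = 2"
    by (cases "a = u") auto
next
  show "zeros_independent V E (f(u := 1))"
    using assms(1) unfolding OIDRD_def zeros_independent_def by auto
qed

theorem proposition2:
  fixes V :: "'a set" and E :: "'a \<Rightarrow> 'a \<Rightarrow> bool"
  assumes "graph V E"
  shows "gamma_oiR V E < gamma_oidR V E"
proof -
  have finV: "finite V" and neV: "V \<noteq> {}" using assms by (auto simp: graph_def)
  obtain f where f: "OIDRD V E f" and gf: "gamma_oidR V E = weight V f"
    using gamma_oidR_attained[OF finV] .
  have "\<exists>g. OIRD V E g \<and> weight V g < weight V f"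
  proof (cases "\<exists>u\<in>V. f u = 3")
    case True
    then obtain u where "u \<in> V" "f u = 3" by blast
    then have "weight V (\<lambda>v. min (f v) 2) < weight V f"
      using finV by (intro weight_strict_mono) auto
    then show ?thesis using OIRD_cap_at_2[OF f] by blast
  next
    case False
    have "DRD V E f" using f by (simp add: OIDRD_def)
    then obtain u where "u \<in> V" "f u \<ge> 2" "f u \<le> 3"
      using DRD_ex_value_ge_2[OF _ neV] unfolding DRD_def by blast
    with False have u: "u \<in> V" "f u = 2" by auto
    then have "weight V (f(u := 1)) < weight V f"
      using finV by (intro weight_strict_mono) auto
    then show ?thesis using OIRD_lower_a_2[OF f _ u] False by blast
  qed
  then obtain g where "OIRD V E g" and "weight V g < weight V f" by blast
  with gamma_oiR_le_weight[OF finV] gf show ?thesis by fastforce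
qed

end
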